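(* Let $0<\kappa<1$, $\lambda=\sqrt{1-\kappa^2}$, and let $k\in(0,1)$ be defined by $k^2=\frac{1-\lambda}{1+\lambda}$. For $\phi$ near $0$ define $$u(\phi)=\int_0^{\phi} F\!\left(\tfrac14,\tfrac34;\tfrac12;\kappa^2\sin^2\theta\right)\,\mathrm{d}\theta ,$$ let $u\mapsto\phi(u)$ be the local inverse near $0$ with $\phi(0)=0$, and set $c(u)=\cos\phi(u)$. Let $\mathrm{cn},\mathrm{dn}$ be the Jacobian elliptic functions of modulus $k$. Then $$c^2(u)=\mathrm{cn}^2\!\left[(1+k^2)^{-1/2}u\right]\,\mathrm{dn}^2\!\left[(1+k^2)^{-1/2}u\right].$$
   Context: $F(a,b;c;z)$ denotes the Gauss hypergeometric function ${}_2F_1(a,b;c;z)$. $\mathrm{sn},\mathrm{cn},\mathrm{dn}$ are the standard Jacobian elliptic functions of modulus $k$. The identity holds near $u=0$ (and hence for the meromorphic extension of $c^2$). *)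

theory Defs
  imports "HOL-Analysis.Analysis"
begin

text \<open>Gauss hypergeometric function F(a,b;c;z) as its power series (for real arguments, |z| < 1).\<close>
definition hyp2F1 :: "real \<Rightarrow> real \<Rightarrow> real \<Rightarrow> real \<Rightarrow> real" where
  "hyp2F1 a b c z =
     (\<Sum>n. pochhammer a n * pochhammer b n / (pochhammer c n * fact n) * z ^ n)"

definition integral0 :: "(real \<Rightarrow> real) \<Rightarrow> real \<Rightarrow> real" where
  "integral0 f x = (if 0 \<le> x then integral {0..x} f else - integral {x..0} f)"

definition ellF :: "real \<Rightarrow> real \<Rightarrow> real" where
  "ellF k \<phi> = integral0 (\<lambda>\<theta>. 1 / sqrt (1 - k\<^sup>2 * (sin \<theta>)\<^sup>2)) \<phi>"

text \<open>Jacobi amplitude: inverse of ellF (for 0 < k < 1 this is a bijection of the reals).\<close>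
definition jam :: "real \<Rightarrow> real \<Rightarrow> real" where
  "jam k u = (THE \<phi>. ellF k \<phi> = u)"

definition jsn :: "real \<Rightarrow> real \<Rightarrow> real" where
  "jsn k u = sin (jam k u)"

definition jcn :: "real \<Rightarrow> real \<Rightarrow> real" where
  "jcn k u = cos (jam k u)"

definition jdn :: "real \<Rightarrow> real \<Rightarrow> real" where
  "jdn k u = sqrt (1 - k\<^sup>2 * (jsn k u)\<^sup>2)"

end

theory Submission
  imports Defs
begin

text \<open>For \<open>|t| < 1\<close> the series \<open>F(1/4, 3/4; 1/2; t\<^sup>2)\<close> is the even part of the binomial
  series of \<open>(1 + t) powr (-1/2)\<close>, so the integrand of \<open>u(\<phi>)\<close> is
  \<open>((1 + \<kappa> sin \<phi>) powr (-1/2) + (1 - \<kappa> sin \<phi>) powr (-1/2)) / 2\<close>. The condition on \<open>k\<close>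
  says \<open>\<kappa> = 2k / (1 + k\<^sup>2)\<close>, and then the substitution
  \<open>sin \<phi> = sin \<psi> * sqrt (1 + k\<^sup>2 - k\<^sup>2 sin\<^sup>2 \<psi>)\<close> makes both \<open>1 \<plusminus> \<kappa> sin \<phi>\<close> perfect squares,
  \<open>(sqrt (1 + k\<^sup>2 - k\<^sup>2 sin\<^sup>2 \<psi>) \<plusminus> k sin \<psi>)\<^sup>2 / (1 + k\<^sup>2)\<close>. A direct computation then gives
  \<open>du/d\<psi> = sqrt (1 + k\<^sup>2) / sqrt (1 - k\<^sup>2 sin\<^sup>2 \<psi>)\<close>, i.e. \<open>u = sqrt (1 + k\<^sup>2) F(\<psi>, k)\<close>, so
  \<open>\<psi> = am ((1 + k\<^sup>2) powr (-1/2) u)\<close>, while the substitution itself is equivalent to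
  \<open>cos\<^sup>2 \<phi> = cos\<^sup>2 \<psi> (1 - k\<^sup>2 sin\<^sup>2 \<psi>) = cn\<^sup>2 dn\<^sup>2\<close>.\<close>

lemma has_real_derivative_integral0:
  fixes f :: "real \<Rightarrow> real"
  assumes "continuous_on UNIV f"
  shows "(integral0 f has_real_derivative f x) (at x)"
proof -
  define a where "a = - (\<bar>x\<bar> + 1)"
  define b where "b = \<bar>x\<bar> + 1"
  have cont: "continuous_on S f" for S
    using assms by (rule continuous_on_subset) simp
  have shift: "integral0 f y = integral {a..y} f - integral {a..0} f" if "y \<in> {a<..<b}" for y
  proof (cases "0 \<le> y")
    case True
    have "integral {a..0} f + integral {0..y} f = integral {a..y} f"
      using True that by (intro Henstock_Kurzweil_Integration.integral_combine
          integrable_continuous_interval cont) (auto simp: a_def)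
    then show ?thesis using True by (simp add: integral0_def)
  next
    case False
    have "integral {a..y} f + integral {y..0} f = integral {a..0} f"
      using False that by (intro Henstock_Kurzweil_Integration.integral_combine
          integrable_continuous_interval cont) auto
    then show ?thesis using False by (simp add: integral0_def)
  qed
  have "((\<lambda>y. integral {a..y} f) has_real_derivative f x) (at x within {a..b})"
    by (rule integral_has_real_derivative) (auto simp: a_def b_def intro: cont)
  moreover have "at x within {a..b} = at x"
    by (rule at_within_interior) (auto simp: a_def b_def)
  ultimately have "((\<lambda>y. integral {a..y} f - integral {a..0} f) has_real_derivative f x) (at x)"
    by (auto intro!: derivative_eq_intros)
  then show ?thesis
    by (rule has_field_derivative_transform_within_open[where S = "{a<..<b}"])
       (auto simp: shift a_def b_def)
qed

lemma strict_mono_of_deriv_pos: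
  fixes F F' :: "real \<Rightarrow> real"
  assumes "\<And>x. (F has_real_derivative F' x) (at x)" and "\<And>x. 0 < F' x"
  shows "strict_mono F"
proof (rule strict_monoI)
  fix a b :: real
  assume "a < b"
  then show "F a < F b"
    by (rule DERIV_pos_imp_increasing) (use assms in blast)
qed

lemma eventually_strict_mono_inverse_in_interval:
  fixes U \<phi> :: "real \<Rightarrow> real"
  assumes "strict_mono U" and "U a < y" and "y < U b"
    and "\<forall>\<^sub>F u in nhds y. U (\<phi> u) = u"
  shows "\<forall>\<^sub>F u in nhds y. \<phi> u \<in> {a<..<b}"
proof -
  have "\<forall>\<^sub>F u in nhds y. u \<in> {U a<..<U b}"
    using assms(2,3) by (intro eventually_nhds_in_open) auto
  with assms(4) show ?thesis
    by eventually_elim (metis assms(1) greaterThanLessThan_iff strict_mono_less)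
qed

lemma hyp2F1_quarter_three_quarters_half_sq:
  fixes t :: real
  assumes t: "\<bar>t\<bar> < 1"
  shows "hyp2F1 (1/4) (3/4) (1/2) (t\<^sup>2) = (1 / sqrt (1 + t) + 1 / sqrt (1 - t)) / 2"
proof -
  define p where "p m = pochhammer (1/2::real) m / fact m" for m
  define S where "S = ((1 + t) powr (-1/2) + (1 - t) powr (-1/2)) / 2"
  have gchoose: "(-(1/2)::real) gchoose m = (-1)^m * p m" for m
    by (simp add: gbinomial_pochhammer p_def)
  have plus: "(\<lambda>m. (-1)^m * p m * t^m) sums ((1 + t) powr (-1/2))"
    using gen_binomial_real[OF t, of "-1/2"] by (simp add: gchoose)
  have minus: "(\<lambda>m. (-1)^m * p m * (-t)^m) sums ((1 - t) powr (-1/2))"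
    using gen_binomial_real[of "-t" "-1/2"] t by (simp add: gchoose)
  have "(\<lambda>m. ((-1)^m * p m * t^m + (-1)^m * p m * (-t)^m) / 2) sums S"
    unfolding S_def by (intro sums_divide sums_add plus minus)
  also have "(\<lambda>m. ((-1)^m * p m * t^m + (-1)^m * p m * (-t)^m) / 2)
               = (\<lambda>m. if even m then p m * t^m else 0)"
    by (auto simp: fun_eq_iff power_minus')
  finally have "(\<lambda>n. p (2 * n) * t^(2 * n)) sums S"
    by (subst (asm) sums_mono_reindex[of "\<lambda>n. 2 * n", symmetric])
       (auto simp: strict_mono_def elim!: evenE)
  moreover have "p (2 * n) * t^(2 * n)
      = pochhammer (1/4) n * pochhammer (3/4) n / (pochhammer (1/2) n * fact n) * (t\<^sup>2)^n" for n
  proof -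
    have "pochhammer (1/2::real) (2 * n) = pochhammer (2 * (1/4)) (2 * n)" by simp
    also have "\<dots> = of_nat (2^(2 * n)) * pochhammer (1/4) n * pochhammer (3/4) n"
      by (subst pochhammer_double) (simp add: field_simps)
    moreover have "t^(2 * n) = (t\<^sup>2)^n" by (simp add: power_mult)
    ultimately show ?thesis
      unfolding p_def fact_double by (simp add: field_simps)
  qed
  ultimately have "hyp2F1 (1/4) (3/4) (1/2) (t\<^sup>2) = S"
    unfolding hyp2F1_def by (simp add: sums_iff)
  also have "S = (1 / sqrt (1 + t) + 1 / sqrt (1 - t)) / 2"
    using t by (simp add: S_def powr_minus_divide powr_half_sqrt del: powr_minus)
  finally show ?thesis .
qed

lemma abs_mult_sin_less_one:
  fixes \<kappa> :: real
  assumes "\<bar>\<kappa>\<bar> < 1"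
  shows "\<bar>\<kappa> * sin \<theta>\<bar> < 1"
proof -
  have "\<bar>\<kappa> * sin \<theta>\<bar> \<le> \<bar>\<kappa>\<bar>"
    by (simp add: abs_mult mult_left_le)
  with assms show ?thesis
    by linarith
qed

lemma has_real_derivative_hyp2F1_integral:
  fixes \<kappa> :: real
  assumes "\<bar>\<kappa>\<bar> < 1"
  shows "(integral0 (\<lambda>\<theta>. hyp2F1 (1/4) (3/4) (1/2) (\<kappa>\<^sup>2 * (sin \<theta>)\<^sup>2)) has_real_derivative
           (1 / sqrt (1 + \<kappa> * sin x) + 1 / sqrt (1 - \<kappa> * sin x)) / 2) (at x)"
proof -
  note small = abs_mult_sin_less_one[OF assms]
  have pos: "0 < 1 + \<kappa> * sin \<theta>" "0 < 1 - \<kappa> * sin \<theta>" for \<theta>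
    using small[of \<theta>] by (simp_all add: abs_less_iff)
  have closed: "hyp2F1 (1/4) (3/4) (1/2) (\<kappa>\<^sup>2 * (sin \<theta>)\<^sup>2)
      = (1 / sqrt (1 + \<kappa> * sin \<theta>) + 1 / sqrt (1 - \<kappa> * sin \<theta>)) / 2" for \<theta>
    using hyp2F1_quarter_three_quarters_half_sq[OF small[of \<theta>]] by (simp only: power_mult_distrib)
  have "continuous_on UNIV
      (\<lambda>\<theta>. (1 / sqrt (1 + \<kappa> * sin \<theta>) + 1 / sqrt (1 - \<kappa> * sin \<theta>)) / 2)"
    using pos by (intro continuous_intros) (auto simp: less_imp_neq[symmetric])
  then show ?thesis
    by (simp only: closed) (rule has_real_derivative_integral0)
qed

lemma strict_mono_hyp2F1_integral:
  fixes \<kappa> :: real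
  assumes "\<bar>\<kappa>\<bar> < 1"
  shows "strict_mono (integral0 (\<lambda>\<theta>. hyp2F1 (1/4) (3/4) (1/2) (\<kappa>\<^sup>2 * (sin \<theta>)\<^sup>2)))"
proof (rule strict_mono_of_deriv_pos[OF has_real_derivative_hyp2F1_integral[OF assms]])
  fix x
  have "0 < 1 + \<kappa> * sin x" "0 < 1 - \<kappa> * sin x"
    using abs_mult_sin_less_one[OF assms, of x] by (simp_all add: abs_less_iff)
  then show "0 < (1 / sqrt (1 + \<kappa> * sin x) + 1 / sqrt (1 - \<kappa> * sin x)) / 2"
    by (auto intro!: divide_pos_pos add_pos_pos)
qed

lemma has_real_derivative_ellF:
  fixes k :: real
  assumes "k\<^sup>2 < 1"
  shows "(ellF k has_real_derivative 1 / sqrt (1 - k\<^sup>2 * (sin x)\<^sup>2)) (at x)"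
proof -
  have "k\<^sup>2 * (sin \<theta>)\<^sup>2 \<le> k\<^sup>2" for \<theta>
    by (simp add: mult_left_le abs_square_le_1)
  then have "0 < 1 - k\<^sup>2 * (sin \<theta>)\<^sup>2" for \<theta>
    using assms by (metis diff_gt_0_iff_gt le_less_trans)
  then have "continuous_on UNIV (\<lambda>\<theta>. 1 / sqrt (1 - k\<^sup>2 * (sin \<theta>)\<^sup>2))"
    by (intro continuous_intros) (auto simp: less_imp_neq[symmetric])
  then show ?thesis
    unfolding ellF_def[abs_def] by (rule has_real_derivative_integral0)
qed

lemma strict_mono_ellF:
  fixes k :: real
  assumes "k\<^sup>2 < 1"
  shows "strict_mono (ellF k)"
proof (rule strict_mono_of_deriv_pos[OF has_real_derivative_ellF[OF assms]])
  fix x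
  have "k\<^sup>2 * (sin x)\<^sup>2 \<le> k\<^sup>2"
    by (simp add: mult_left_le abs_square_le_1)
  with assms show "0 < 1 / sqrt (1 - k\<^sup>2 * (sin x)\<^sup>2)"
    by simp
qed

lemma jam_ellF:
  fixes k :: real
  assumes "k\<^sup>2 < 1"
  shows "jam k (ellF k \<psi>) = \<psi>"
  unfolding jam_def using strict_mono_eq[OF strict_mono_ellF[OF assms]] by blast

lemma landen_sine_identity:
  fixes k s :: real
  assumes "s\<^sup>2 \<le> 1"
  shows "1 - (s * sqrt (1 + k\<^sup>2 - k\<^sup>2 * s\<^sup>2))\<^sup>2 = (1 - s\<^sup>2) * (1 - k\<^sup>2 * s\<^sup>2)"
proof -
  have "k\<^sup>2 * s\<^sup>2 \<le> k\<^sup>2"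
    using assms by (simp add: mult_left_le)
  then have sq: "(sqrt (1 + k\<^sup>2 - k\<^sup>2 * s\<^sup>2))\<^sup>2 = 1 + k\<^sup>2 - k\<^sup>2 * s\<^sup>2"
    by (intro real_sqrt_pow2) simp
  show ?thesis
    unfolding power_mult_distrib sq by algebra
qed

lemma landen_sine_bound:
  fixes k s :: real
  assumes "k\<^sup>2 \<le> 1" and "s\<^sup>2 \<le> 1"
  shows "\<bar>s * sqrt (1 + k\<^sup>2 - k\<^sup>2 * s\<^sup>2)\<bar> \<le> 1"
proof -
  have "k\<^sup>2 * s\<^sup>2 \<le> 1"
    using assms by (simp add: mult_le_one)
  then have "0 \<le> (1 - s\<^sup>2) * (1 - k\<^sup>2 * s\<^sup>2)"
    using assms(2) by simp
  then have "(s * sqrt (1 + k\<^sup>2 - k\<^sup>2 * s\<^sup>2))\<^sup>2 \<le> 1"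
    using landen_sine_identity[OF assms(2), of k] by linarith
  then show ?thesis
    using abs_square_le_1 by blast
qed

lemma abs_less_landen_sqrt:
  fixes k s :: real
  assumes "k\<^sup>2 < 1" and "s\<^sup>2 \<le> 1"
  shows "\<bar>k * s\<bar> < sqrt (1 + k\<^sup>2 - k\<^sup>2 * s\<^sup>2)"
proof -
  have "k\<^sup>2 * s\<^sup>2 \<le> k\<^sup>2"
    using assms(2) by (simp add: mult_left_le)
  then have "\<bar>k * s\<bar>\<^sup>2 < 1 + k\<^sup>2 - k\<^sup>2 * s\<^sup>2"
    using assms(1) by (simp add: power_mult_distrib)
  then show ?thesis
    by (rule real_less_rsqrt)
qed

lemma landen_sqrt_one_plus:
  fixes k s :: real
  assumes "k\<^sup>2 < 1" and "s\<^sup>2 \<le> 1"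
  shows "sqrt (1 + 2 * k / (1 + k\<^sup>2) * (s * sqrt (1 + k\<^sup>2 - k\<^sup>2 * s\<^sup>2)))
           = (sqrt (1 + k\<^sup>2 - k\<^sup>2 * s\<^sup>2) + k * s) / sqrt (1 + k\<^sup>2)"
proof -
  define w where "w = sqrt (1 + k\<^sup>2 - k\<^sup>2 * s\<^sup>2)"
  have "k\<^sup>2 * s\<^sup>2 \<le> k\<^sup>2"
    using assms(2) by (simp add: mult_left_le)
  then have w2: "w\<^sup>2 = 1 + k\<^sup>2 - k\<^sup>2 * s\<^sup>2"
    unfolding w_def by (intro real_sqrt_pow2) simp
  have k1: "0 < 1 + k\<^sup>2"
    by (simp add: add_pos_nonneg)
  show ?thesis
    unfolding w_def[symmetric]
  proof (rule real_sqrt_unique)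
    have "(w + k * s)\<^sup>2 = (1 + k\<^sup>2) * (1 + 2 * k / (1 + k\<^sup>2) * (s * w))"
      using w2 k1 by (simp add: power2_sum power_mult_distrib field_simps)
    then show "((w + k * s) / sqrt (1 + k\<^sup>2))\<^sup>2 = 1 + 2 * k / (1 + k\<^sup>2) * (s * w)"
      using k1 by (simp add: power_divide)
    have "0 \<le> w + k * s"
      using abs_less_landen_sqrt[OF assms] unfolding w_def[symmetric] by (simp add: abs_less_iff)
    then show "0 \<le> (w + k * s) / sqrt (1 + k\<^sup>2)"
      by simp
  qed
qed

lemma landen_integrand:
  fixes k s :: real
  defines "w \<equiv> sqrt (1 + k\<^sup>2 - k\<^sup>2 * s\<^sup>2)" and "\<kappa> \<equiv> 2 * k / (1 + k\<^sup>2)"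
  assumes "k\<^sup>2 < 1" and "s\<^sup>2 \<le> 1"
  shows "(1 / sqrt (1 + \<kappa> * (s * w)) + 1 / sqrt (1 - \<kappa> * (s * w))) / 2
           = sqrt (1 + k\<^sup>2) * w / (1 + k\<^sup>2 - 2 * k\<^sup>2 * s\<^sup>2)"
proof -
  define r where "r = sqrt (1 + k\<^sup>2)"
  have "k\<^sup>2 * s\<^sup>2 \<le> k\<^sup>2"
    using assms(4) by (simp add: mult_left_le)
  then have w2: "w\<^sup>2 = 1 + k\<^sup>2 - k\<^sup>2 * s\<^sup>2" and P: "0 < 1 + k\<^sup>2 - 2 * k\<^sup>2 * s\<^sup>2"
    using assms(3) unfolding w_def by simp_all
  have plus: "sqrt (1 + \<kappa> * (s * w)) = (w + k * s) / r"
    using landen_sqrt_one_plus[OF assms(3,4)] unfolding \<kappa>_def w_def r_def .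
  have minus: "sqrt (1 - \<kappa> * (s * w)) = (w - k * s) / r"
    using landen_sqrt_one_plus[of "- k" s] assms(3,4) unfolding \<kappa>_def w_def r_def by simp
  have "w + k * s \<noteq> 0" "w - k * s \<noteq> 0"
    using abs_less_landen_sqrt[OF assms(3,4)] unfolding w_def[symmetric]
    by (simp_all add: abs_less_iff)
  then have sum: "1 / sqrt (1 + \<kappa> * (s * w)) + 1 / sqrt (1 - \<kappa> * (s * w))
      = (r * (w - k * s) + r * (w + k * s)) / ((w + k * s) * (w - k * s))"
    unfolding plus minus by (simp add: add_frac_eq)
  have num: "r * (w - k * s) + r * (w + k * s) = 2 * (r * w)"
    by (simp add: algebra_simps)
  have den: "(w + k * s) * (w - k * s) = 1 + k\<^sup>2 - 2 * k\<^sup>2 * s\<^sup>2"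
    using w2 by (simp add: algebra_simps power2_eq_square)
  show ?thesis
    unfolding r_def[symmetric] using P by (simp only: sum num den) (simp add: field_simps)
qed

definition landen_amplitude :: "real \<Rightarrow> real \<Rightarrow> real" where
  "landen_amplitude k \<psi> = arcsin (sin \<psi> * sqrt (1 + k\<^sup>2 - k\<^sup>2 * (sin \<psi>)\<^sup>2))"

lemma sin_landen_amplitude:
  assumes "k\<^sup>2 \<le> 1"
  shows "sin (landen_amplitude k \<psi>) = sin \<psi> * sqrt (1 + k\<^sup>2 - k\<^sup>2 * (sin \<psi>)\<^sup>2)"
  using landen_sine_bound[OF assms, of "sin \<psi>"]
  by (simp add: landen_amplitude_def abs_square_le_1 abs_le_iff)

lemma cos_landen_amplitude_sq:
  assumes "k\<^sup>2 \<le> 1"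
  shows "(cos (landen_amplitude k \<psi>))\<^sup>2 = (cos \<psi>)\<^sup>2 * (1 - k\<^sup>2 * (sin \<psi>)\<^sup>2)"
  using landen_sine_identity[of "sin \<psi>" k]
  by (simp add: cos_squared_eq sin_landen_amplitude[OF assms] abs_square_le_1)

lemma cos_landen_amplitude_sq_eq_jcn_jdn:
  assumes "k\<^sup>2 < 1"
  shows "(cos (landen_amplitude k \<psi>))\<^sup>2 = (jcn k (ellF k \<psi>))\<^sup>2 * (jdn k (ellF k \<psi>))\<^sup>2"
proof -
  have "k\<^sup>2 * (sin \<psi>)\<^sup>2 \<le> k\<^sup>2"
    by (simp add: mult_left_le abs_square_le_1)
  with assms show ?thesis
    by (simp add: cos_landen_amplitude_sq jcn_def jdn_def jsn_def jam_ellF)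
qed

lemma landen_amplitude_surj:
  assumes "k\<^sup>2 \<le> 1" and y: "y \<in> {-(pi/2)<..<pi/2}"
  obtains \<psi> where "\<psi> \<in> {-(pi/2)<..<pi/2}" and "landen_amplitude k \<psi> = y"
proof -
  have "continuous_on {-(pi/2)..pi/2} (landen_amplitude k)"
    unfolding landen_amplitude_def
    using landen_sine_bound[OF assms(1)]
    by (intro continuous_intros) (auto simp: abs_square_le_1 abs_le_iff)
  moreover have ends: "landen_amplitude k (-(pi/2)) = -(pi/2)" "landen_amplitude k (pi/2) = pi/2"
    by (simp_all add: landen_amplitude_def)
  ultimately obtain \<psi> where \<psi>: "-(pi/2) \<le> \<psi>" "\<psi> \<le> pi/2" "landen_amplitude k \<psi> = y"
    using IVT'[of "landen_amplitude k" "-(pi/2)" y "pi/2"] y by auto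
  moreover have "\<psi> \<noteq> -(pi/2)" "\<psi> \<noteq> pi/2"
    using \<psi>(3) y ends by (metis greaterThanLessThan_iff less_irrefl)+
  ultimately have "\<psi> \<in> {-(pi/2)<..<pi/2}"
    by auto
  then show ?thesis
    using \<psi>(3) by (rule that)
qed

lemma has_real_derivative_landen_sine:
  fixes k :: real
  shows "((\<lambda>x. sin x * sqrt (1 + k\<^sup>2 - k\<^sup>2 * (sin x)\<^sup>2)) has_real_derivative
           cos \<psi> * (1 + k\<^sup>2 - 2 * k\<^sup>2 * (sin \<psi>)\<^sup>2) / sqrt (1 + k\<^sup>2 - k\<^sup>2 * (sin \<psi>)\<^sup>2))
           (at \<psi>)"
proof -
  define s c where "s = sin \<psi>" and "c = cos \<psi>"
  define w where "w = sqrt (1 + k\<^sup>2 - k\<^sup>2 * s\<^sup>2)"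
  have "k\<^sup>2 * s\<^sup>2 \<le> k\<^sup>2"
    unfolding s_def by (simp add: mult_left_le abs_square_le_1)
  then have pos: "0 < 1 + k\<^sup>2 - k\<^sup>2 * s\<^sup>2"
    by simp
  then have w: "0 < w" "w\<^sup>2 = 1 + k\<^sup>2 - k\<^sup>2 * s\<^sup>2"
    unfolding w_def by simp_all
  have "((\<lambda>x. 1 + k\<^sup>2 - k\<^sup>2 * (sin x)\<^sup>2) has_real_derivative - (k\<^sup>2 * (2 * s * c))) (at \<psi>)"
    unfolding s_def c_def by (rule derivative_eq_intros refl | simp)+
  from DERIV_chain2[OF DERIV_real_sqrt[OF pos[unfolded s_def]] this]
  have "((\<lambda>x. sqrt (1 + k\<^sup>2 - k\<^sup>2 * (sin x)\<^sup>2)) has_real_derivative - (k\<^sup>2 * s * c) / w) (at \<psi>)"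
    unfolding s_def w_def by (simp add: field_simps)
  from DERIV_mult[OF DERIV_sin this]
  have "((\<lambda>x. sin x * sqrt (1 + k\<^sup>2 - k\<^sup>2 * (sin x)\<^sup>2)) has_real_derivative
          c * w - k\<^sup>2 * s * c * s / w) (at \<psi>)"
    unfolding s_def c_def w_def by simp
  moreover have "c * w - k\<^sup>2 * s * c * s / w = c * (w\<^sup>2 - k\<^sup>2 * s\<^sup>2) / w"
    using w(1) by (simp add: field_simps power2_eq_square)
  ultimately show ?thesis
    unfolding w(2) unfolding s_def c_def w_def by (simp add: algebra_simps)
qed

lemma landen_amplitude_has_real_derivative:
  fixes k :: real
  assumes "k\<^sup>2 < 1" and "\<psi> \<in> {-(pi/2)<..<pi/2}"
  shows "(landen_amplitude k has_real_derivative
           (1 + k\<^sup>2 - 2 * k\<^sup>2 * (sin \<psi>)\<^sup>2)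
             / (sqrt (1 + k\<^sup>2 - k\<^sup>2 * (sin \<psi>)\<^sup>2) * sqrt (1 - k\<^sup>2 * (sin \<psi>)\<^sup>2))) (at \<psi>)"
proof -
  define s c where "s = sin \<psi>" and "c = cos \<psi>"
  define w d where "w = sqrt (1 + k\<^sup>2 - k\<^sup>2 * s\<^sup>2)" and "d = sqrt (1 - k\<^sup>2 * s\<^sup>2)"
  have c: "0 < c"
    unfolding c_def using assms(2) by (intro cos_gt_zero_pi) auto
  have s2: "s\<^sup>2 \<le> 1"
    unfolding s_def by (simp add: abs_square_le_1)
  have ks: "k\<^sup>2 * s\<^sup>2 \<le> k\<^sup>2"
    using s2 by (simp add: mult_left_le)
  have w: "0 < w" and d: "0 < d"
    using ks assms(1) unfolding w_def d_def by simp_all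
  have "1 - (s * w)\<^sup>2 = (c * d)\<^sup>2"
    using landen_sine_identity[OF s2, of k] ks assms(1)
    by (simp add: w_def d_def c_def s_def cos_squared_eq power_mult_distrib)
  then have sqrt_one_minus: "sqrt (1 - (s * w)\<^sup>2) = c * d" and "0 < 1 - (s * w)\<^sup>2"
    using c d by simp_all
  then have sw: "-1 < s * w" "s * w < 1"
    by (simp_all add: abs_square_less_1 abs_less_iff)
  from DERIV_chain2[OF DERIV_arcsin[OF sw[unfolded w_def s_def]] has_real_derivative_landen_sine]
  have "(landen_amplitude k has_real_derivative
          inverse (c * d) * (c * (1 + k\<^sup>2 - 2 * k\<^sup>2 * s\<^sup>2) / w)) (at \<psi>)"
    unfolding landen_amplitude_def s_def[symmetric] c_def[symmetric] w_def[symmetric]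
      sqrt_one_minus .
  moreover have "inverse (c * d) * (c * (1 + k\<^sup>2 - 2 * k\<^sup>2 * s\<^sup>2) / w)
      = (1 + k\<^sup>2 - 2 * k\<^sup>2 * s\<^sup>2) / (w * d)"
    using c d w by (simp add: field_simps)
  ultimately show ?thesis
    unfolding s_def[symmetric] w_def[symmetric] d_def[symmetric] by simp
qed

lemma abs_landen_modulus_less_one:
  fixes k :: real
  assumes "k\<^sup>2 < 1"
  shows "\<bar>2 * k / (1 + k\<^sup>2)\<bar> < 1"
proof -
  have "\<bar>k\<bar> < 1"
    using assms by (simp add: abs_square_less_1)
  then have "0 < (1 - \<bar>k\<bar>)\<^sup>2"
    by simp
  then have "\<bar>2 * k\<bar> < 1 + k\<^sup>2"
    by (simp add: power2_diff abs_mult)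
  then show ?thesis
    by (simp add: add_pos_nonneg)
qed

lemma has_real_derivative_hyp2F1_integral_landen_amplitude:
  fixes k :: real
  assumes k: "k\<^sup>2 < 1" and x: "x \<in> {-(pi/2)<..<pi/2}"
  shows "((\<lambda>\<psi>. integral0 (\<lambda>\<theta>. hyp2F1 (1/4) (3/4) (1/2) ((2 * k / (1 + k\<^sup>2))\<^sup>2 * (sin \<theta>)\<^sup>2))
            (landen_amplitude k \<psi>)) has_real_derivative
           sqrt (1 + k\<^sup>2) / sqrt (1 - k\<^sup>2 * (sin x)\<^sup>2)) (at x)"
proof -
  define \<kappa> where "\<kappa> = 2 * k / (1 + k\<^sup>2)"
  define s w d where "s = sin x" and "w = sqrt (1 + k\<^sup>2 - k\<^sup>2 * s\<^sup>2)"
    and "d = sqrt (1 - k\<^sup>2 * s\<^sup>2)"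
  define P where "P = 1 + k\<^sup>2 - 2 * k\<^sup>2 * s\<^sup>2"
  have s2: "s\<^sup>2 \<le> 1"
    unfolding s_def by (simp add: abs_square_le_1)
  then have "k\<^sup>2 * s\<^sup>2 \<le> k\<^sup>2"
    by (simp add: mult_left_le)
  then have "0 < w" "0 < P"
    using k unfolding w_def P_def by auto
  have "sin (landen_amplitude k x) = s * w"
    unfolding s_def w_def using k by (simp add: sin_landen_amplitude)
  with DERIV_chain2[OF has_real_derivative_hyp2F1_integral[OF abs_landen_modulus_less_one[OF k]]
      landen_amplitude_has_real_derivative[OF k x]]
  have "((\<lambda>\<psi>. integral0 (\<lambda>\<theta>. hyp2F1 (1/4) (3/4) (1/2) (\<kappa>\<^sup>2 * (sin \<theta>)\<^sup>2))
            (landen_amplitude k \<psi>)) has_real_derivative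
          (1 / sqrt (1 + \<kappa> * (s * w)) + 1 / sqrt (1 - \<kappa> * (s * w))) / 2 * (P / (w * d))) (at x)"
    unfolding \<kappa>_def s_def[symmetric] w_def[symmetric] d_def[symmetric] P_def[symmetric]
    by simp
  also have "(1 / sqrt (1 + \<kappa> * (s * w)) + 1 / sqrt (1 - \<kappa> * (s * w))) / 2
      = sqrt (1 + k\<^sup>2) * w / P"
    unfolding \<kappa>_def w_def P_def using k s2 by (rule landen_integrand)
  also have "sqrt (1 + k\<^sup>2) * w / P * (P / (w * d)) = sqrt (1 + k\<^sup>2) / d"
    using \<open>0 < w\<close> \<open>0 < P\<close> by simp
  finally show ?thesis
    unfolding \<kappa>_def d_def s_def .
qed

lemma landen_transformation:
  fixes k :: real
  assumes k: "k\<^sup>2 < 1" and "\<psi> \<in> {-(pi/2)<..<pi/2}"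
  shows "integral0 (\<lambda>\<theta>. hyp2F1 (1/4) (3/4) (1/2) ((2 * k / (1 + k\<^sup>2))\<^sup>2 * (sin \<theta>)\<^sup>2))
           (landen_amplitude k \<psi>) = sqrt (1 + k\<^sup>2) * ellF k \<psi>"
    (is "?U (landen_amplitude k \<psi>) = _")
proof -
  define G where "G x = ?U (landen_amplitude k x) - sqrt (1 + k\<^sup>2) * ellF k x" for x
  have "(G has_real_derivative 0) (at x)" if "x \<in> {-(pi/2)<..<pi/2}" for x
    using DERIV_diff[OF has_real_derivative_hyp2F1_integral_landen_amplitude[OF k that]
        DERIV_cmult[where c = "sqrt (1 + k\<^sup>2)", OF has_real_derivative_ellF[OF k]]]
    unfolding G_def by simp
  then obtain C where "\<forall>x\<in>{-(pi/2)<..<pi/2}. G x = C"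
    using has_field_derivative_zero_constant[of "{-(pi/2)<..<pi/2}" G]
    by (auto simp: has_field_derivative_at_within)
  moreover have "G 0 = 0"
    by (simp add: G_def landen_amplitude_def ellF_def integral0_def)
  ultimately have "G \<psi> = 0"
    using assms(2) by auto
  then show ?thesis
    by (simp add: G_def)
qed

lemma landen_modulus:
  fixes \<kappa> lam k :: real
  assumes "0 \<le> \<kappa>" "\<kappa> \<le> 1" and lam: "lam = sqrt (1 - \<kappa>\<^sup>2)"
    and "0 \<le> k" and k: "k\<^sup>2 = (1 - lam) / (1 + lam)"
  shows "\<kappa> = 2 * k / (1 + k\<^sup>2)"
proof -
  have "\<kappa>\<^sup>2 \<le> 1"
    using assms(1,2) by (simp add: abs_square_le_1)
  then have lam0: "0 \<le> lam" and lam2: "lam\<^sup>2 = 1 - \<kappa>\<^sup>2"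
    unfolding lam by simp_all
  have k1: "0 < 1 + k\<^sup>2"
    by (simp add: add_pos_nonneg)
  have "k\<^sup>2 * (1 + lam) = 1 - lam"
    using k lam0 by (simp add: field_simps)
  then have "lam = (1 - k\<^sup>2) / (1 + k\<^sup>2)"
    using k1 by (simp add: field_simps)
  then have "\<kappa>\<^sup>2 = 1 - ((1 - k\<^sup>2) / (1 + k\<^sup>2))\<^sup>2"
    using lam2 by simp
  also have "\<dots> = ((1 + k\<^sup>2)\<^sup>2 - (1 - k\<^sup>2)\<^sup>2) / (1 + k\<^sup>2)\<^sup>2"
    using k1 by (simp add: power_divide field_simps)
  also have "(1 + k\<^sup>2)\<^sup>2 - (1 - k\<^sup>2)\<^sup>2 = (2 * k)\<^sup>2"
    by algebra
  finally have "\<kappa>\<^sup>2 = (2 * k / (1 + k\<^sup>2))\<^sup>2"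
    by (simp add: power_divide)
  then show ?thesis
    using assms(1,4) k1 by (simp add: power2_eq_iff_nonneg)
qed

theorem theorem10:
  fixes \<kappa> lam k :: real and U \<phi> :: "real \<Rightarrow> real"
  assumes "0 < \<kappa>" "\<kappa> < 1"
    and "lam = sqrt (1 - \<kappa>\<^sup>2)"
    and "0 < k" "k < 1" "k\<^sup>2 = (1 - lam) / (1 + lam)"
    and "U = integral0 (\<lambda>\<theta>. hyp2F1 (1/4) (3/4) (1/2) (\<kappa>\<^sup>2 * (sin \<theta>)\<^sup>2))"
    and "\<phi> 0 = 0"
    and "\<forall>\<^sub>F u in nhds 0. U (\<phi> u) = u"
  shows "\<forall>\<^sub>F u in nhds 0.
           (cos (\<phi> u))\<^sup>2 = (jcn k ((1 + k\<^sup>2) powr (-1/2) * u))\<^sup>2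
                           * (jdn k ((1 + k\<^sup>2) powr (-1/2) * u))\<^sup>2"
proof -
  have k: "k\<^sup>2 < 1"
    using assms(4,5) by (simp add: power_less_one_iff)
  have \<kappa>: "\<kappa> = 2 * k / (1 + k\<^sup>2)"
    using assms(1-6) by (intro landen_modulus) auto
  have k1: "0 < 1 + k\<^sup>2"
    by (simp add: add_pos_nonneg)
  have U: "strict_mono U" "U 0 = 0"
    using assms(1,2,7) strict_mono_hyp2F1_integral[of \<kappa>] by (simp_all add: integral0_def)
  have "U (-(pi/2)) < U 0" "U 0 < U (pi/2)"
    using U(1) by (simp_all add: strict_mono_less)
  with U assms(9) have "\<forall>\<^sub>F u in nhds 0. \<phi> u \<in> {-(pi/2)<..<pi/2}"
    by (intro eventually_strict_mono_inverse_in_interval) auto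
  with assms(9) show ?thesis
  proof eventually_elim
    case (elim u)
    obtain \<psi> where \<psi>: "\<psi> \<in> {-(pi/2)<..<pi/2}" "landen_amplitude k \<psi> = \<phi> u"
      using landen_amplitude_surj[OF less_imp_le[OF k] elim(2)] .
    have "u = sqrt (1 + k\<^sup>2) * ellF k \<psi>"
      using landen_transformation[OF k \<psi>(1)] elim(1) \<psi>(2) assms(7) \<kappa> by simp
    then have "(1 + k\<^sup>2) powr (-1/2) * u = ellF k \<psi>"
      using k1 by (simp add: powr_minus_divide powr_half_sqrt del: powr_minus)
    then show ?case
      using cos_landen_amplitude_sq_eq_jcn_jdn[OF k, of \<psi>] \<psi>(2) by simp
  qed
qed

end
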